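(* For every $N\ge 1$, $$\mathbb{E}[\mathcal{R}_2(N)]=H_{N-1},\qquad \mathbb{E}[\mathcal{R}_2(N)^2]=H_{N-1}^2+H_{N-1}-H_{N-1}^{(2)},\qquad \operatorname{Var}[\mathcal{R}_2(N)]=H_{N-1}-H_{N-1}^{(2)},$$ where $H_n=\sum_{i=1}^n 1/i$ and $H_n^{(2)}=\sum_{i=1}^n 1/i^2$ (with $H_0=H_0^{(2)}=0$).
   Context: A random recursive hypergraph (RRH) is the random hypergraph process defined as follows. At size $N=1$ it has vertex set $\{v_1\}$ and edge set $\{\{v_1\}\}$. Given the hypergraph of size $N$ (vertices $v_1,\dots,v_N$, exactly $N$ edges), one chooses an existing edge $e$ uniformly at random, independently of the past, and adds a new vertex $v_{N+1}$ together with the new edge $e\cup\{v_{N+1}\}$. The rank of a vertex $v$ is $\min\{|e| : v\in e\}$. $\mathcal{R}_k(N)$ denotes the number of vertices of rank $k$ in the RRH of size $N$ (equivalently, the number of edges of size $k$). *)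

theory Defs
  imports "HOL-Probability.Probability"
begin

text \<open>A hypergraph of the random recursive hypergraph process is represented by the
  list of its edges in order of creation; vertex v_i is the natural number i.\<close>

definition rrh_step :: "nat set list \<Rightarrow> nat set list pmf" where
  "rrh_step es =
     map_pmf (\<lambda>i. es @ [insert (Suc (length es)) (es ! i)]) (pmf_of_set {..<length es})"

text \<open>Law of the RRH of size N (only meaningful for N \<ge> 1; size 0 is a dummy value).\<close>
fun rrh :: "nat \<Rightarrow> nat set list pmf" where
  "rrh 0 = return_pmf [{1}]"
| "rrh (Suc 0) = return_pmf [{1}]"
| "rrh (Suc (Suc n)) = rrh (Suc n) \<bind> rrh_step"

definition hg_vertices :: "nat set list \<Rightarrow> nat set" where
  "hg_vertices es = \<Union> (set es)"

definition hg_rank :: "nat set list \<Rightarrow> nat \<Rightarrow> nat" where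
  "hg_rank es v = Min (card ` {e \<in> set es. v \<in> e})"

definition rank_count :: "nat \<Rightarrow> nat set list \<Rightarrow> nat" where
  "rank_count k es = card {v \<in> hg_vertices es. hg_rank es v = k}"

definition harm2 :: "nat \<Rightarrow> real" where
  "harm2 n = (\<Sum>i=1..n. 1 / (real i)^2)"

end

theory Submission imports Defs begin

text \<open>Every RRH is well-formed: the edge e_i at list position i is the one created with
  vertex v_(i+1), it contains v_1, and it contains the creation edge of each of its vertices.
  Hence the rank of v_j is the size of e_(j-1), so R_2 counts the edges of size 2. A new edge
  has size 2 exactly when it extends the singleton e_0, which happens with probability 1/N.
  Thus R_2(N+1) = R_2(N) + X_N with X_N a Bernoulli(1/N) increment, and both moments follow
  by induction on N.\<close>

definition rrh_wf :: "nat set list \<Rightarrow> bool" where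
  "rrh_wf es \<longleftrightarrow> es \<noteq> [] \<and> es ! 0 = {1} \<and>
     (\<forall>i<length es. Suc i \<in> es ! i \<and> 1 \<in> es ! i \<and> es ! i \<subseteq> {1..Suc i}
        \<and> (\<forall>v\<in>es ! i. es ! (v - 1) \<subseteq> es ! i))"

lemma rrh_wfD:
  assumes "rrh_wf es" "i < length es"
  shows "Suc i \<in> es ! i" "1 \<in> es ! i" "es ! i \<subseteq> {1..Suc i}"
    and "v \<in> es ! i \<Longrightarrow> es ! (v - 1) \<subseteq> es ! i"
  using assms unfolding rrh_wf_def by blast+

lemma rrh_wf_snoc:
  assumes wf: "rrh_wf es" and i: "i < length es"
  shows "rrh_wf (es @ [insert (Suc (length es)) (es ! i)])"
proof -
  let ?e = "insert (Suc (length es)) (es ! i)"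
  let ?es = "es @ [?e]"
  have old: "Suc j \<in> ?es ! j \<and> 1 \<in> ?es ! j \<and> ?es ! j \<subseteq> {1..Suc j}
      \<and> (\<forall>v\<in>?es ! j. ?es ! (v - 1) \<subseteq> ?es ! j)" if j: "j < length es" for j
  proof -
    have "\<forall>v\<in>es ! j. v - 1 < length es" using rrh_wfD(3)[OF wf j] j by force
    then show ?thesis using rrh_wfD[OF wf j] j by (auto simp: nth_append)
  qed
  have sub: "es ! i \<subseteq> {1..Suc i}" by (rule rrh_wfD(3)[OF wf i])
  then have "\<forall>v\<in>es ! i. v - 1 < length es" using i by force
  then have "\<forall>v\<in>?e. ?es ! (v - 1) \<subseteq> ?e"
    using rrh_wfD(4)[OF wf i] by (auto simp: nth_append)
  moreover have "1 \<in> ?e" using rrh_wfD(2)[OF wf i] by blast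
  moreover have "?e \<subseteq> {1..Suc (length es)}" using sub i by auto
  ultimately have new: "Suc j \<in> ?es ! j \<and> 1 \<in> ?es ! j \<and> ?es ! j \<subseteq> {1..Suc j}
      \<and> (\<forall>v\<in>?es ! j. ?es ! (v - 1) \<subseteq> ?es ! j)" if "j = length es" for j
    using that by auto
  have "?es ! 0 = {1}" using wf unfolding rrh_wf_def by (simp add: nth_append)
  with old new show ?thesis
    unfolding rrh_wf_def by (auto simp: less_Suc_eq)
qed

lemma set_pmf_rrh:
  assumes "es \<in> set_pmf (rrh (Suc n))"
  shows "rrh_wf es \<and> length es = Suc n"
  using assms
proof (induction n arbitrary: es)
  case 0
  then show ?case by (auto simp: rrh_wf_def)
next
  case (Suc n)
  then obtain es0 i where es0: "es0 \<in> set_pmf (rrh (Suc n))"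
    and i: "i \<in> set_pmf (pmf_of_set {..<length es0})"
    and es: "es = es0 @ [insert (Suc (length es0)) (es0 ! i)]"
    by (auto simp: rrh_step_def)
  have wf: "rrh_wf es0" "length es0 = Suc n" using Suc.IH[OF es0] by auto
  then have "i < length es0" using i by (subst (asm) set_pmf_of_set) auto
  then show ?case using rrh_wf_snoc[OF wf(1)] es wf(2) by simp
qed

lemma finite_set_pmf_rrh: "finite (set_pmf (rrh n))"
proof (induction n rule: rrh.induct)
  case (3 n)
  have "finite (set_pmf (rrh_step es))" if "es \<in> set_pmf (rrh (Suc n))" for es
    using set_pmf_rrh[OF that]
    by (simp add: rrh_step_def set_pmf_of_set lessThan_empty_iff)
  with 3 show ?case by (simp add: set_bind_pmf)
qed auto

lemma hg_vertices_rrh_wf: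
  assumes wf: "rrh_wf es"
  shows "hg_vertices es = {1..length es}"
proof
  show "hg_vertices es \<subseteq> {1..length es}"
  proof
    fix v assume "v \<in> hg_vertices es"
    then obtain j where j: "j < length es" "v \<in> es ! j"
      by (auto simp: hg_vertices_def in_set_conv_nth)
    then have "v \<in> {1..Suc j}" using rrh_wfD(3)[OF wf j(1)] by blast
    with j(1) show "v \<in> {1..length es}" by auto
  qed
  show "{1..length es} \<subseteq> hg_vertices es"
  proof
    fix v assume v: "v \<in> {1..length es}"
    then have "v - 1 < length es" "Suc (v - 1) = v" by auto
    then have "v \<in> es ! (v - 1)" using rrh_wfD(1)[OF wf, of "v - 1"] by simp
    then show "v \<in> hg_vertices es" using v by (auto simp: hg_vertices_def)
  qed
qed

lemma hg_rank_rrh_wf: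
  assumes wf: "rrh_wf es" and v: "v \<in> {1..length es}"
  shows "hg_rank es v = card (es ! (v - 1))"
  unfolding hg_rank_def
proof (rule Min_eqI)
  have j: "v - 1 < length es" "Suc (v - 1) = v" using v by auto
  then have "v \<in> es ! (v - 1)" using rrh_wfD(1)[OF wf, of "v - 1"] by simp
  with j(1) show "card (es ! (v - 1)) \<in> card ` {e \<in> set es. v \<in> e}" by auto
next
  fix x assume "x \<in> card ` {e \<in> set es. v \<in> e}"
  then obtain j where j: "j < length es" "v \<in> es ! j" "x = card (es ! j)"
    by (auto simp: in_set_conv_nth)
  have "finite (es ! j)" using rrh_wfD(3)[OF wf j(1)] finite_subset by blast
  then show "card (es ! (v - 1)) \<le> x"
    using rrh_wfD(4)[OF wf j(1,2)] j(3) card_mono by metis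
qed simp

definition edge_count :: "nat \<Rightarrow> nat set list \<Rightarrow> nat" where
  "edge_count k es = card {i. i < length es \<and> card (es ! i) = k}"

lemma rank_count_eq_edge_count:
  assumes wf: "rrh_wf es"
  shows "rank_count k es = edge_count k es"
proof -
  have "{v \<in> hg_vertices es. hg_rank es v = k} = Suc ` {i. i < length es \<and> card (es ! i) = k}"
  proof (intro equalityI subsetI)
    fix v assume "v \<in> {v \<in> hg_vertices es. hg_rank es v = k}"
    then have "v \<in> {1..length es}" "card (es ! (v - 1)) = k"
      using hg_vertices_rrh_wf[OF wf] hg_rank_rrh_wf[OF wf] by auto
    then show "v \<in> Suc ` {i. i < length es \<and> card (es ! i) = k}"
      by (intro image_eqI[of _ _ "v - 1"]) auto
  qed (use hg_vertices_rrh_wf[OF wf] hg_rank_rrh_wf[OF wf] in auto)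
  then show ?thesis unfolding rank_count_def edge_count_def by (simp add: card_image)
qed

lemma edge_count_snoc: "edge_count k (es @ [e]) = edge_count k es + of_bool (card e = k)"
proof -
  have "edge_count k (es @ [e])
      = card ({i. i < length es \<and> card (es ! i) = k} \<union> {i. i = length es \<and> card e = k})"
    unfolding edge_count_def by (rule arg_cong[where f = card]) (auto simp: nth_append less_Suc_eq)
  also have "\<dots> = edge_count k es + card {i. i = length es \<and> card e = k}"
    unfolding edge_count_def by (rule card_Un_disjoint) auto
  finally show ?thesis by simp
qed

text \<open>Only the first edge is a singleton: every later edge e_i contains both v_1 and v_(i+1).\<close>
lemma card_edge_eq_1_iff:
  assumes wf: "rrh_wf es" and i: "i < length es"
  shows "card (es ! i) = 1 \<longleftrightarrow> i = 0"
proof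
  assume c: "card (es ! i) = 1"
  show "i = 0"
  proof (rule ccontr)
    assume "i \<noteq> 0"
    then have "{1, Suc i} \<subseteq> es ! i" "card {1, Suc i} = 2"
      using rrh_wfD(1,2)[OF wf i] by auto
    moreover have "finite (es ! i)" using rrh_wfD(3)[OF wf i] finite_subset by blast
    ultimately have "2 \<le> card (es ! i)" by (metis card_mono)
    with c show False by simp
  qed
qed (use wf in \<open>simp add: rrh_wf_def\<close>)

lemma rank_count_2_snoc:
  assumes wf: "rrh_wf es" and i: "i < length es"
  shows "rank_count 2 (es @ [insert (Suc (length es)) (es ! i)])
       = rank_count 2 es + of_bool (i = 0)"
proof -
  have "finite (es ! i)" using rrh_wfD(3)[OF wf i] finite_subset by blast
  moreover have "Suc (length es) \<notin> es ! i" using rrh_wfD(3)[OF wf i] i by auto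
  ultimately have "card (insert (Suc (length es)) (es ! i)) = 2 \<longleftrightarrow> card (es ! i) = 1" by simp
  then have "card (insert (Suc (length es)) (es ! i)) = 2 \<longleftrightarrow> i = 0"
    using card_edge_eq_1_iff[OF wf i] by simp
  then show ?thesis
    unfolding rank_count_eq_edge_count[OF rrh_wf_snoc[OF wf i]] rank_count_eq_edge_count[OF wf]
      edge_count_snoc by simp
qed

definition rank2_law :: "nat \<Rightarrow> nat pmf" where
  "rank2_law n = map_pmf (rank_count 2) (rrh (Suc n))"

definition increment_first :: "nat \<Rightarrow> nat \<Rightarrow> nat pmf" where
  "increment_first m k = map_pmf (\<lambda>i. k + of_bool (i = 0)) (pmf_of_set {..<m})"

lemma rank2_law_0: "rank2_law 0 = return_pmf 0"
  by (simp add: rank2_law_def rank_count_def hg_vertices_def hg_rank_def)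

lemma rank2_law_Suc: "rank2_law (Suc n) = rank2_law n \<bind> increment_first (Suc n)"
proof -
  have "map_pmf (rank_count 2) (rrh_step es) = increment_first (Suc n) (rank_count 2 es)"
    if "es \<in> set_pmf (rrh (Suc n))" for es
  proof -
    have wf: "rrh_wf es" "length es = Suc n" using set_pmf_rrh[OF that] by auto
    have "map_pmf (rank_count 2) (rrh_step es) = map_pmf (\<lambda>i. rank_count 2 es + of_bool (i = 0))
            (pmf_of_set {..<length es})"
      unfolding rrh_step_def pmf.map_comp o_def
    proof (rule pmf.map_cong[OF refl])
      fix i assume "i \<in> set_pmf (pmf_of_set {..<length es})"
      then have "i < length es" using wf(2) by (subst (asm) set_pmf_of_set) auto
      then show "rank_count 2 (es @ [insert (Suc (length es)) (es ! i)])
          = rank_count 2 es + of_bool (i = 0)"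
        by (rule rank_count_2_snoc[OF wf(1)])
    qed
    then show ?thesis using wf(2) by (simp add: increment_first_def)
  qed
  then show ?thesis
    unfolding rank2_law_def by (simp add: map_bind_pmf bind_map_pmf cong: bind_pmf_cong)
qed

lemma finite_set_pmf_rank2_law: "finite (set_pmf (rank2_law n))"
  using finite_set_pmf_rrh by (simp add: rank2_law_def)

lemma expectation_increment_first:
  fixes h :: "nat \<Rightarrow> real"
  shows "measure_pmf.expectation (increment_first (Suc n) k) h = (h (k + 1) + n * h k) / Suc n"
proof -
  have "measure_pmf.expectation (increment_first (Suc n) k) h
      = (\<Sum>i<Suc n. h (k + of_bool (i = 0))) / Suc n"
    unfolding increment_first_def
    by (simp only: integral_map_pmf, subst integral_pmf_of_set) auto
  also have "(\<Sum>i<Suc n. h (k + of_bool (i = 0))) = h (k + 1) + n * h k"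
    by (subst sum.lessThan_Suc_shift) simp
  finally show ?thesis .
qed

lemma expectation_bind_increment_first:
  fixes h :: "nat \<Rightarrow> real"
  assumes fin: "finite (set_pmf p)"
  shows "measure_pmf.expectation (p \<bind> increment_first (Suc n)) h
       = measure_pmf.expectation p (\<lambda>k. (h (k + 1) + n * h k) / Suc n)"
proof -
  have "finite (set_pmf (increment_first (Suc n) k))" for k
    by (simp add: increment_first_def set_pmf_of_set lessThan_empty_iff)
  then have "measure_pmf.expectation (p \<bind> increment_first (Suc n)) h
      = (\<Sum>k\<in>set_pmf p. pmf p k *\<^sub>R measure_pmf.expectation (increment_first (Suc n) k) h)"
    by (rule pmf_expectation_bind[OF fin]) auto
  also have "\<dots> = (\<Sum>k\<in>set_pmf p. pmf p k *\<^sub>R ((h (k + 1) + n * h k) / Suc n))"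
    by (simp only: expectation_increment_first)
  also have "\<dots> = measure_pmf.expectation p (\<lambda>k. (h (k + 1) + n * h k) / Suc n)"
    by (rule integral_measure_pmf[OF fin, symmetric]) auto
  finally show ?thesis .
qed

lemma expectation_rank2_Suc:
  fixes h :: "nat \<Rightarrow> real"
  shows "measure_pmf.expectation (rank2_law (Suc n)) h
       = measure_pmf.expectation (rank2_law n) (\<lambda>k. h k + (h (k + 1) - h k) / Suc n)"
  unfolding rank2_law_Suc expectation_bind_increment_first[OF finite_set_pmf_rank2_law]
  by (rule Bochner_Integration.integral_cong) (auto simp: field_simps)

lemma expectation_rank2_law: "measure_pmf.expectation (rank2_law n) real = harm n"
proof (induction n)
  case 0
  then show ?case by (simp add: rank2_law_0 harm_def)
next
  case (Suc n)
  have "measure_pmf.expectation (rank2_law (Suc n)) real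
      = measure_pmf.expectation (rank2_law n) real + 1 / Suc n"
    by (simp add: expectation_rank2_Suc integrable_measure_pmf_finite[OF finite_set_pmf_rank2_law])
  with Suc show ?case by (simp add: harm_Suc inverse_eq_divide)
qed

lemma harm2_Suc: "harm2 (Suc n) = harm2 n + 1 / (Suc n)\<^sup>2"
  by (simp add: harm2_def)

lemma second_moment_rank2_law:
  "measure_pmf.expectation (rank2_law n) (\<lambda>k. (real k)\<^sup>2) = (harm n)\<^sup>2 + harm n - harm2 n"
proof (induction n)
  case 0
  then show ?case by (simp add: rank2_law_0 harm_def harm2_def)
next
  case (Suc n)
  let ?E = "measure_pmf.expectation (rank2_law n)"
  have "(\<lambda>k. (real k)\<^sup>2 + ((real (k + 1))\<^sup>2 - (real k)\<^sup>2) / Suc n)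
      = (\<lambda>k. (real k)\<^sup>2 + 2 / Suc n * real k + 1 / Suc n)"
    by (auto simp: field_simps power2_eq_square)
  then have "measure_pmf.expectation (rank2_law (Suc n)) (\<lambda>k. (real k)\<^sup>2)
      = ?E (\<lambda>k. (real k)\<^sup>2) + 2 / Suc n * ?E real + 1 / Suc n"
    by (simp add: expectation_rank2_Suc integrable_measure_pmf_finite[OF finite_set_pmf_rank2_law])
  also have "\<dots> = (harm n)\<^sup>2 + harm n - harm2 n + 2 / Suc n * harm n + 1 / Suc n"
    using Suc.IH expectation_rank2_law[of n] by simp
  also have "\<dots> = (harm n + 1 / Suc n)\<^sup>2 + (harm n + 1 / Suc n) - (harm2 n + 1 / (Suc n)\<^sup>2)"
    by (simp add: field_simps power2_eq_square del: of_nat_Suc) (simp add: algebra_simps)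
  finally show ?case by (simp add: harm_Suc harm2_Suc inverse_eq_divide)
qed

theorem mainTheorem8:
  fixes N :: nat
  assumes "N \<ge> 1"
  shows "measure_pmf.expectation (rrh N) (\<lambda>es. real (rank_count 2 es)) = harm (N - 1)
       \<and> measure_pmf.expectation (rrh N) (\<lambda>es. (real (rank_count 2 es))^2)
           = (harm (N - 1))^2 + harm (N - 1) - harm2 (N - 1)
       \<and> measure_pmf.variance (rrh N) (\<lambda>es. real (rank_count 2 es))
           = harm (N - 1) - harm2 (N - 1)"
proof -
  obtain n where N: "N = Suc n" using assms by (cases N) auto
  have mean: "measure_pmf.expectation (rrh N) (\<lambda>es. real (rank_count 2 es)) = harm n"
    using expectation_rank2_law[of n] by (simp add: rank2_law_def N)
  have second: "measure_pmf.expectation (rrh N) (\<lambda>es. (real (rank_count 2 es))\<^sup>2)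
      = (harm n)\<^sup>2 + harm n - harm2 n"
    using second_moment_rank2_law[of n] by (simp add: rank2_law_def N)
  have "measure_pmf.variance (rrh N) (\<lambda>es. real (rank_count 2 es))
      = measure_pmf.expectation (rrh N) (\<lambda>es. (real (rank_count 2 es))\<^sup>2)
        - (measure_pmf.expectation (rrh N) (\<lambda>es. real (rank_count 2 es)))\<^sup>2"
    by (rule measure_pmf.variance_eq) (auto intro: integrable_measure_pmf_finite[OF finite_set_pmf_rrh])
  with mean second show ?thesis by (simp add: N)
qed

end
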